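(* Let $P=\{x\in\mathbb R^3:(a^i)^\intercal x\le b_i,\ 1\le i\le n\}$ be a 3-dimensional polytope centrally symmetric with respect to the origin, each inequality defining a facet $F_i$ with supporting hyperplane $H_i$. Let $j\in\{1,2,3\}$, let $k=6$ if $j\le2$ and $k=7$ if $j=3$, and let $H_{l_1},\dots,H_{l_k}$ be facet hyperplanes of $P$. Let $A$ be an affine subspace of $\mathcal S_{H_{l_1},\dots,H_{l_k}}$, given as $A=\{C+\sum_{i=1}^r\lambda_iM_i:\lambda\in\mathbb R^r\}$ with $C,M_i\in\mathbb R^{3\times3}$. There exists an algorithm which either finds $W\in A$ such that: if $j=1$, $\mathcal U^1_W\subset\mathrm{bd}(P)$ and $(-1,1,1)_W,(1,-1,1)_W,(1,1,-1)_W\notin\mathrm{int}(P)$; if $j=2$, $\mathcal U^2_W\subset\mathrm{bd}(P)$ and $(1,1,1)_W\notin\mathrm{int}(P)$; if $j=3$, $\mathcal U^3_W\subset\mathrm{bd}(P)$ (and hence $W\mathbb Z^3$ is admissible for $P$) — or asserts that no such $W\in A$ exists.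
   Context: For $W=(w^1,w^2,w^3)\in\mathbb R^{3\times3}$ and $x\in\mathbb R^3$, $(x_1,x_2,x_3)_W=x_1w^1+x_2w^2+x_3w^3$. Test sets: $\mathcal U^1_W=\{(1,0,0)_W,(0,1,0)_W,(0,0,1)_W,(0,1,-1)_W,(-1,0,1)_W,(1,-1,0)_W\}$; $\mathcal U^2_W=\{(1,0,0)_W,(0,1,0)_W,(0,0,1)_W,(0,1,1)_W,(1,0,1)_W,(1,1,0)_W\}$; $\mathcal U^3_W=\mathcal U^2_W\cup\{(1,1,1)_W\}$; list the elements of $\mathcal U^j_W$ in this order as $u^1_W,\dots,u^k_W$. $\mathcal S_{H_{l_1},\dots,H_{l_k}}=\{W\in\mathbb R^{3\times3}: u^i_W\in H_{l_i},\ 1\le i\le k\}$ (with the test set of kind $j$). A lattice $\Lambda$ is admissible for $P$ if $\mathrm{int}(P)\cap\Lambda=\{0\}$. Algorithms operate exactly on real numbers (linear programming feasibility available). *)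

theory Defs
  imports "HOL-Analysis.Analysis"
begin

text \<open>Coordinates with respect to W: (x1,x2,x3)_W = x1 w1 + x2 w2 + x3 w3,
  where w1, w2, w3 are the columns of W. This is W *v x.\<close>

definition ivec :: "int \<times> int \<times> int \<Rightarrow> real^3" where
  "ivec e = (case e of (x1, x2, x3) \<Rightarrow> vector [of_int x1, of_int x2, of_int x3])"

definition coordW :: "real^3^3 \<Rightarrow> int \<times> int \<times> int \<Rightarrow> real^3" where
  "coordW W e = W *v ivec e"

text \<open>Test sets (as lists of coefficient triples, in the order of the paper).\<close>

definition testset :: "nat \<Rightarrow> (int \<times> int \<times> int) list" where
  "testset j =
    (if j = 1 then [(1,0,0),(0,1,0),(0,0,1),(0,1,-1),(-1,0,1),(1,-1,0)]
     else if j = 2 then [(1,0,0),(0,1,0),(0,0,1),(0,1,1),(1,0,1),(1,1,0)]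
     else [(1,0,0),(0,1,0),(0,0,1),(0,1,1),(1,0,1),(1,1,0),(1,1,1)])"

definition testk :: "nat \<Rightarrow> nat" where
  "testk j = (if j \<le> 2 then 6 else 7)"

definition polyP :: "nat \<Rightarrow> (nat \<Rightarrow> real^3) \<Rightarrow> (nat \<Rightarrow> real) \<Rightarrow> (real^3) set" where
  "polyP n a b = {x. \<forall>i<n. a i \<bullet> x \<le> b i}"

definition hypH :: "(nat \<Rightarrow> real^3) \<Rightarrow> (nat \<Rightarrow> real) \<Rightarrow> nat \<Rightarrow> (real^3) set" where
  "hypH a b i = {x. a i \<bullet> x = b i}"

definition Sset :: "nat \<Rightarrow> (nat \<Rightarrow> real^3) \<Rightarrow> (nat \<Rightarrow> real) \<Rightarrow> (nat \<Rightarrow> nat) \<Rightarrow> (real^3^3) set" where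
  "Sset j a b l = {W. \<forall>i<testk j. coordW W (testset j ! i) \<in> hypH a b (l i)}"

definition affpt :: "real^3^3 \<Rightarrow> (nat \<Rightarrow> real^3^3) \<Rightarrow> nat \<Rightarrow> (nat \<Rightarrow> real) \<Rightarrow> real^3^3" where
  "affpt C M r lam = C + (\<Sum>m<r. lam m *\<^sub>R M m)"

definition goodW :: "nat \<Rightarrow> (real^3) set \<Rightarrow> real^3^3 \<Rightarrow> bool" where
  "goodW j P W =
    ((\<forall>e \<in> set (testset j). coordW W e \<in> frontier P) \<and>
     (j = 1 \<longrightarrow> coordW W (-1,1,1) \<notin> interior P \<and> coordW W (1,-1,1) \<notin> interior P
                \<and> coordW W (1,1,-1) \<notin> interior P) \<and>
     (j = 2 \<longrightarrow> coordW W (1,1,1) \<notin> interior P))"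

text \<open>Model of the algorithm: finitely many LP feasibility tests. A linear constraint
  on the parameter lambda is a rw (i, e, s) meaning a_i . (e)_W <= b_i if s, and
  a_i . (e)_W >= b_i if not s, with W = C + sum lambda_m M_m (affine in lambda).\<close>

definition rowHolds :: "(nat \<Rightarrow> real^3) \<Rightarrow> (nat \<Rightarrow> real) \<Rightarrow> real^3^3
    \<Rightarrow> nat \<times> (int \<times> int \<times> int) \<times> bool \<Rightarrow> bool" where
  "rowHolds a b W rw = (case rw of (i, e, s) \<Rightarrow>
     (if s then a i \<bullet> coordW W e \<le> b i else a i \<bullet> coordW W e \<ge> b i))"

end

theory Submission
  imports Defs
begin

text \<open>Because every facet
  normal is nonzero, the interior of P is cut out by the strict inequalities, so a point
  of the form (e)_W misses int(P) iff some facet inequality is tight or reversed at it.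
  Guessing, for every test point, which facet this is turns the requirement on W into
  finitely many systems of linear inequalities in the parameter lambda, and the good
  parameters are exactly the union of their solution sets.\<close>

lemma facet_of_hyperplane_normal_nonzero:
  assumes "(S \<inter> {x. a \<bullet> x = b}) facet_of S"
  shows "a \<noteq> 0"
proof
  assume "a = 0"
  then have "S \<inter> {x. a \<bullet> x = b} = S \<or> S \<inter> {x. a \<bullet> x = b} = {}"
    by auto
  with assms show False
    by (auto simp: facet_of_def)
qed

lemma closed_halfspaces_le:
  fixes a :: "nat \<Rightarrow> 'a::real_inner" and n :: nat
  shows "closed {x. \<forall>i<n. a i \<bullet> x \<le> b i}"
  by (intro closed_Collect_all closed_Collect_imp open_Collect_const closed_halfspace_le)

lemma interior_halfspaces_le:
  fixes a :: "nat \<Rightarrow> 'a::real_inner" and n :: nat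
  assumes "\<forall>i<n. a i \<noteq> 0"
  shows "interior {x. \<forall>i<n. a i \<bullet> x \<le> b i} = {x. \<forall>i<n. a i \<bullet> x < b i}"
  using assms
proof (induction n)
  case (Suc n)
  have "{x. \<forall>i<Suc n. a i \<bullet> x \<le> b i} = {x. \<forall>i<n. a i \<bullet> x \<le> b i} \<inter> {x. a n \<bullet> x \<le> b n}"
    by (auto simp: less_Suc_eq)
  with Suc show ?case
    by (auto simp: less_Suc_eq)
qed simp

lemma frontier_halfspaces_le:
  fixes a :: "nat \<Rightarrow> 'a::real_inner" and n :: nat
  assumes "\<forall>i<n. a i \<noteq> 0"
  shows "x \<in> frontier {x. \<forall>i<n. a i \<bullet> x \<le> b i} \<longleftrightarrow>
    (\<forall>i<n. a i \<bullet> x \<le> b i) \<and> (\<exists>i<n. b i \<le> a i \<bullet> x)"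
  using closed_halfspaces_le[of n a b] interior_halfspaces_le[of n a b, OF assms]
  by (auto simp: frontier_def not_less)

definition extra_tests :: "nat \<Rightarrow> (int \<times> int \<times> int) set" where
  "extra_tests j =
    (if j = 1 then {(-1,1,1),(1,-1,1),(1,1,-1)} else if j = 2 then {(1,1,1)} else {})"

lemma goodW_iff_inequalities:
  assumes "\<forall>i<n. a i \<noteq> 0"
  shows "goodW j (polyP n a b) W \<longleftrightarrow>
    (\<forall>e\<in>set (testset j). \<forall>i<n. a i \<bullet> coordW W e \<le> b i) \<and>
    (\<forall>e\<in>set (testset j) \<union> extra_tests j. \<exists>i<n. b i \<le> a i \<bullet> coordW W e)"
proof -
  have outside_interior: "x \<notin> interior (polyP n a b) \<longleftrightarrow> (\<exists>i<n. b i \<le> a i \<bullet> x)" for x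
    using interior_halfspaces_le[OF assms] by (auto simp: polyP_def not_less)
  have on_frontier: "x \<in> frontier (polyP n a b) \<longleftrightarrow>
      (\<forall>i<n. a i \<bullet> x \<le> b i) \<and> (\<exists>i<n. b i \<le> a i \<bullet> x)" for x
    unfolding polyP_def by (rule frontier_halfspaces_le[OF assms])
  have "goodW j (polyP n a b) W \<longleftrightarrow>
      (\<forall>e\<in>set (testset j). coordW W e \<in> frontier (polyP n a b)) \<and>
      (\<forall>e\<in>extra_tests j. coordW W e \<notin> interior (polyP n a b))"
    by (auto simp: goodW_def extra_tests_def)
  then show ?thesis
    unfolding on_frontier outside_interior ball_Un by blast
qed

text \<open>f e guesses a facet inequality that is tight or reversed at (e)_W.\<close>

definition lp_systems ::
    "nat \<Rightarrow> (int \<times> int \<times> int) set \<Rightarrow> (int \<times> int \<times> int) set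
      \<Rightarrow> (nat \<times> (int \<times> int \<times> int) \<times> bool) set set" where
  "lp_systems n B E =
    (\<lambda>f. {..<n} \<times> B \<times> {True} \<union> (\<lambda>e. (f e, e, False)) ` E) ` (E \<rightarrow>\<^sub>E {..<n})"

lemma finite_lp_systems:
  assumes "finite B" "finite E"
  shows "finite (lp_systems n B E)" and "S \<in> lp_systems n B E \<Longrightarrow> finite S"
proof -
  show "finite (lp_systems n B E)"
    unfolding lp_systems_def using assms by (intro finite_imageI finite_PiE) auto
  assume "S \<in> lp_systems n B E"
  then obtain f where "S = {..<n} \<times> B \<times> {True} \<union> (\<lambda>e. (f e, e, False)) ` E"
    unfolding lp_systems_def by blast
  with assms show "finite S"
    by simp
qed

lemma lp_systems_feasible_iff:
  "(\<exists>S\<in>lp_systems n B E. \<forall>rw\<in>S. rowHolds a b W rw) \<longleftrightarrow>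
    (\<forall>e\<in>B. \<forall>i<n. a i \<bullet> coordW W e \<le> b i) \<and> (\<forall>e\<in>E. \<exists>i<n. b i \<le> a i \<bullet> coordW W e)"
proof
  assume "\<exists>S\<in>lp_systems n B E. \<forall>rw\<in>S. rowHolds a b W rw"
  then obtain f where f: "f \<in> E \<rightarrow>\<^sub>E {..<n}"
    and rows: "\<forall>rw\<in>{..<n} \<times> B \<times> {True} \<union> (\<lambda>e. (f e, e, False)) ` E. rowHolds a b W rw"
    by (auto simp: lp_systems_def)
  show "(\<forall>e\<in>B. \<forall>i<n. a i \<bullet> coordW W e \<le> b i) \<and> (\<forall>e\<in>E. \<exists>i<n. b i \<le> a i \<bullet> coordW W e)"
  proof (intro conjI ballI allI impI)
    fix e i assume "e \<in> B" "i < n"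
    with rows have "rowHolds a b W (i, e, True)" by blast
    then show "a i \<bullet> coordW W e \<le> b i" by (simp add: rowHolds_def)
  next
    fix e assume "e \<in> E"
    with rows have "rowHolds a b W (f e, e, False)" by blast
    moreover have "f e < n" using f \<open>e \<in> E\<close> by auto
    ultimately show "\<exists>i<n. b i \<le> a i \<bullet> coordW W e" by (auto simp: rowHolds_def)
  qed
next
  assume "(\<forall>e\<in>B. \<forall>i<n. a i \<bullet> coordW W e \<le> b i) \<and> (\<forall>e\<in>E. \<exists>i<n. b i \<le> a i \<bullet> coordW W e)"
  then have B: "\<forall>e\<in>B. \<forall>i<n. a i \<bullet> coordW W e \<le> b i"
    and E: "\<forall>e\<in>E. \<exists>i<n. b i \<le> a i \<bullet> coordW W e"
    by blast+
  from E obtain g where g: "\<forall>e\<in>E. g e < n \<and> b (g e) \<le> a (g e) \<bullet> coordW W e"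
    by metis
  let ?S = "{..<n} \<times> B \<times> {True} \<union> (\<lambda>e. (g e, e, False)) ` E"
  have "?S \<in> lp_systems n B E"
    unfolding lp_systems_def
  proof (rule image_eqI[where x = "restrict g E"])
    show "restrict g E \<in> E \<rightarrow>\<^sub>E {..<n}"
      using g by auto
  qed auto
  moreover have "\<forall>rw\<in>?S. rowHolds a b W rw"
    using B g by (auto simp: rowHolds_def)
  ultimately show "\<exists>S\<in>lp_systems n B E. \<forall>rw\<in>S. rowHolds a b W rw"
    by blast
qed

theorem lemma4p16:
  fixes n j r :: nat and l :: "nat \<Rightarrow> nat"
  assumes "j \<in> {1, 2, 3}"
  shows "\<exists>(\<F> :: (nat \<times> (int \<times> int \<times> int) \<times> bool) set set).
     finite \<F> \<and> (\<forall>S\<in>\<F>. finite S) \<and>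
     (\<forall>(a :: nat \<Rightarrow> real^3) (b :: nat \<Rightarrow> real) (C :: real^3^3) (M :: nat \<Rightarrow> real^3^3).
        polytope (polyP n a b) \<and> aff_dim (polyP n a b) = 3 \<and>
        (\<forall>x \<in> polyP n a b. - x \<in> polyP n a b) \<and>
        (\<forall>i<n. (polyP n a b \<inter> hypH a b i) facet_of polyP n a b) \<and>
        (\<forall>i<testk j. l i < n) \<and>
        (\<forall>lam. affpt C M r lam \<in> Sset j a b l)
      \<longrightarrow> {lam. goodW j (polyP n a b) (affpt C M r lam)}
          = (\<Union>S\<in>\<F>. {lam. \<forall>rw\<in>S. rowHolds a b (affpt C M r lam) rw}))"
proof -
  let ?\<F> = "lp_systems n (set (testset j)) (set (testset j) \<union> extra_tests j)"
  have "finite (set (testset j) \<union> extra_tests j)"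
    by (simp add: extra_tests_def)
  from finite_lp_systems[OF finite_set this]
  have finite_systems: "finite ?\<F>" "\<forall>S\<in>?\<F>. finite S"
    by auto
  have good_set_eq_feasible_set: "{lam. goodW j (polyP n a b) (affpt C M r lam)}
      = (\<Union>S\<in>?\<F>. {lam. \<forall>rw\<in>S. rowHolds a b (affpt C M r lam) rw})"
    if "\<forall>i<n. (polyP n a b \<inter> hypH a b i) facet_of polyP n a b" for a b C M
  proof -
    have "\<forall>i<n. a i \<noteq> 0"
      using that facet_of_hyperplane_normal_nonzero by (auto simp: hypH_def)
    then have "goodW j (polyP n a b) (affpt C M r lam) \<longleftrightarrow>
        (\<exists>S\<in>?\<F>. \<forall>rw\<in>S. rowHolds a b (affpt C M r lam) rw)" for lam
      by (simp only: goodW_iff_inequalities lp_systems_feasible_iff)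
    then show ?thesis
      by blast
  qed
  show ?thesis
    by (intro exI[of _ ?\<F>] conjI allI impI finite_systems) (elim conjE good_set_eq_feasible_set)
qed

end
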